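(* Let $\mu$ be any $r$-level Sherali-Adams solution of a $\Delta$-dense Max $k$-CSP instance $\mathcal{G}=(V,\mathcal{W},\{P_S\})$ with alphabet size $q$. Then for every integer $0<l\le r-k$ there exists an integer $0\le t\le l$ such that $$\mathbb{E}_{T\sim V^t,\ \phi_T\sim\mathcal{X}_T}[C(\mu|\phi_T)]\le\frac{k^2\log q}{l\Delta},$$ where $T$ is a uniformly random $t$-tuple of variables (identified with its underlying set) and $\phi_T$ is sampled from the marginal distribution $\mathcal{X}_T$ of $\mu$.
   Context: A Max $k$-CSP instance has finite variable set $V$, alphabet $\Sigma$ with $|\Sigma|=q$, a distribution $\mathcal{W}$ on $V^k$ and predicates $P_S:\Sigma^k\to[0,1]$; it is $\Delta$-dense if $\Delta\cdot\mathcal{W}(S)\le1/|V|^k$ for every $S\in V^k$. An $r$-level Sherali-Adams solution is a collection $\mu=\{\mathcal{X}_S\}$ of distributions $\mathcal{X}_S$ on $\Sigma^S$ for all $S\subseteq V$ with $|S|\le r$ whose marginals agree on intersections. For $|T|\le r-k$ and $\phi_T$ with $\mathcal{X}_T(\phi_T)>0$, the conditioned solution $\mu|\phi_T=\{\tilde{\mathcal{X}}_S\}_{|S|\le r-|T|}$ is given by $\tilde{\mathcal{X}}_S(\phi_S)=\mathcal{X}_{S\cup T}(\phi_S\circ\phi_T)/\mathcal{X}_T(\phi_T)$ if $\phi_S$ agrees with $\phi_T$ on $S\cap T$ and $0$ otherwise. For a tuple $S=(x_{i_1},\dots,x_{i_j})$, $C_\mu(x_S)$ is the total correlation (KL divergence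 of the joint distribution from the product of marginals, natural log) of $(\sigma_{i_1},\dots,\sigma_{i_j})$ jointly sampled from $\mathcal{X}_{\{x_{i_1},\dots,x_{i_j}\}}$, and $C(\mu)=\mathbb{E}_{S\sim\mathcal{W}}[C_\mu(x_S)]$. *)

theory Defs
  imports Complex_Main "HOL-Library.FuncSet"
begin

definition is_distr :: "('b \<Rightarrow> real) \<Rightarrow> 'b set \<Rightarrow> bool" where
  "is_distr p A \<longleftrightarrow> (\<forall>x\<in>A. 0 \<le> p x) \<and> sum p A = 1"

definition tuples :: "'v set \<Rightarrow> nat \<Rightarrow> 'v list set" where
  "tuples V k = {xs. set xs \<subseteq> V \<and> length xs = k}"

definition max_kcsp ::
  "'v set \<Rightarrow> 'a set \<Rightarrow> nat \<Rightarrow> ('v list \<Rightarrow> real) \<Rightarrow> ('v list \<Rightarrow> 'a list \<Rightarrow> real) \<Rightarrow> bool" where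
  "max_kcsp V \<Sigma> k W P \<longleftrightarrow> finite V \<and> V \<noteq> {} \<and> finite \<Sigma> \<and> \<Sigma> \<noteq> {} \<and>
     is_distr W (tuples V k) \<and>
     (\<forall>S\<in>tuples V k. \<forall>a\<in>tuples \<Sigma> k. 0 \<le> P S a \<and> P S a \<le> 1)"

definition csp_dense :: "real \<Rightarrow> 'v set \<Rightarrow> nat \<Rightarrow> ('v list \<Rightarrow> real) \<Rightarrow> bool" where
  "csp_dense \<Delta> V k W \<longleftrightarrow> (\<forall>S\<in>tuples V k. \<Delta> * W S \<le> 1 / real (card V) ^ k)"

text \<open>Assignments phi_S : S -> Sigma are extensional maps S to Sigma.
  X S is the local distribution on extensional maps S to Sigma.\<close>
definition marg ::
  "('v set \<Rightarrow> ('v \<Rightarrow> 'a) \<Rightarrow> real) \<Rightarrow> 'a set \<Rightarrow> 'v set \<Rightarrow> 'v set \<Rightarrow> ('v \<Rightarrow> 'a) \<Rightarrow> real" where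
  "marg X \<Sigma> S U \<psi> = (\<Sum>\<phi>\<in>{\<phi> \<in> S \<rightarrow>\<^sub>E \<Sigma>. restrict \<phi> U = \<psi>}. X S \<phi>)"

definition sherali_adams ::
  "nat \<Rightarrow> 'v set \<Rightarrow> 'a set \<Rightarrow> ('v set \<Rightarrow> ('v \<Rightarrow> 'a) \<Rightarrow> real) \<Rightarrow> bool" where
  "sherali_adams r V \<Sigma> X \<longleftrightarrow>
     (\<forall>S. S \<subseteq> V \<and> card S \<le> r \<longrightarrow> is_distr (X S) (S \<rightarrow>\<^sub>E \<Sigma>)) \<and>
     (\<forall>S1 S2 \<psi>. S1 \<subseteq> V \<and> S2 \<subseteq> V \<and> card S1 \<le> r \<and> card S2 \<le> r \<and> \<psi> \<in> (S1 \<inter> S2) \<rightarrow>\<^sub>E \<Sigma>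
        \<longrightarrow> marg X \<Sigma> S1 (S1 \<inter> S2) \<psi> = marg X \<Sigma> S2 (S1 \<inter> S2) \<psi>)"

definition merge :: "'v set \<Rightarrow> ('v \<Rightarrow> 'a) \<Rightarrow> ('v \<Rightarrow> 'a) \<Rightarrow> ('v \<Rightarrow> 'a)" where
  "merge S \<phi>S \<phi>T = (\<lambda>x. if x \<in> S then \<phi>S x else \<phi>T x)"

definition cond ::
  "('v set \<Rightarrow> ('v \<Rightarrow> 'a) \<Rightarrow> real) \<Rightarrow> 'v set \<Rightarrow> ('v \<Rightarrow> 'a) \<Rightarrow> ('v set \<Rightarrow> ('v \<Rightarrow> 'a) \<Rightarrow> real)" where
  "cond X T \<phi>T = (\<lambda>S \<phi>S. if (\<forall>x\<in>S \<inter> T. \<phi>S x = \<phi>T x)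
       then X (S \<union> T) (merge S \<phi>S \<phi>T) / X T \<phi>T else 0)"

definition joint_law ::
  "('v set \<Rightarrow> ('v \<Rightarrow> 'a) \<Rightarrow> real) \<Rightarrow> 'a set \<Rightarrow> 'v list \<Rightarrow> 'a list \<Rightarrow> real" where
  "joint_law X \<Sigma> xs a = (\<Sum>\<phi>\<in>{\<phi> \<in> set xs \<rightarrow>\<^sub>E \<Sigma>. map \<phi> xs = a}. X (set xs) \<phi>)"

definition coord_law ::
  "('v set \<Rightarrow> ('v \<Rightarrow> 'a) \<Rightarrow> real) \<Rightarrow> 'a set \<Rightarrow> 'v list \<Rightarrow> nat \<Rightarrow> 'a \<Rightarrow> real" where
  "coord_law X \<Sigma> xs j b = (\<Sum>\<phi>\<in>{\<phi> \<in> set xs \<rightarrow>\<^sub>E \<Sigma>. \<phi> (xs ! j) = b}. X (set xs) \<phi>)"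

definition total_corr ::
  "('v set \<Rightarrow> ('v \<Rightarrow> 'a) \<Rightarrow> real) \<Rightarrow> 'a set \<Rightarrow> 'v list \<Rightarrow> real" where
  "total_corr X \<Sigma> xs =
     (\<Sum>a\<in>tuples \<Sigma> (length xs).
        if 0 < joint_law X \<Sigma> xs a
        then joint_law X \<Sigma> xs a *
             ln (joint_law X \<Sigma> xs a / (\<Prod>j<length xs. coord_law X \<Sigma> xs j (a ! j)))
        else 0)"

definition csp_corr ::
  "('v list \<Rightarrow> real) \<Rightarrow> 'v set \<Rightarrow> 'a set \<Rightarrow> nat \<Rightarrow> ('v set \<Rightarrow> ('v \<Rightarrow> 'a) \<Rightarrow> real) \<Rightarrow> real" where
  "csp_corr W V \<Sigma> k X = (\<Sum>S\<in>tuples V k. W S * total_corr X \<Sigma> S)"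

definition exp_cond_corr ::
  "('v list \<Rightarrow> real) \<Rightarrow> 'v set \<Rightarrow> 'a set \<Rightarrow> nat \<Rightarrow> ('v set \<Rightarrow> ('v \<Rightarrow> 'a) \<Rightarrow> real) \<Rightarrow> nat \<Rightarrow> real" where
  "exp_cond_corr W V \<Sigma> k X t =
     (1 / real (card V) ^ t) *
     (\<Sum>T\<in>tuples V t. \<Sum>\<phi>\<in>set T \<rightarrow>\<^sub>E \<Sigma>.
        if 0 < X (set T) \<phi> then X (set T) \<phi> * csp_corr W V \<Sigma> k (cond X (set T) \<phi>) else 0)"

end

theory Submission
  imports Defs
begin

text \<open>
  Conditioning on an assignment phi_T drawn from mu and averaging over it, the total correlation
  of a constraint tuple x_S becomes, by the chain rule for entropy,
  sum_i [H(sigma_{S_i} | sigma_T) - H(sigma_{S_i} | sigma_T, sigma_{S_1}, ..., sigma_{S_{i-1}})].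
  Density bounds the constraint distribution by 1/Delta times the uniform distribution on V^k,
  so averaging over T ~ V^t turns the i-th summand into K_t - K_{t+i}, where K_m is the entropy
  of a uniformly random variable given a uniformly random m-tuple. As 0 <= K_m <= log q, the sum
  of K_t - K_{t+i} over t < l telescopes to at most i log q. Hence the expected correlations for
  t < l sum to at most k^2 log q / Delta, and one of them is at most k^2 log q / (l Delta).
\<close>

section \<open>Sums over tuples\<close>

lemma finite_tuples: "finite A \<Longrightarrow> finite (tuples A n)"
  unfolding tuples_def by (rule finite_lists_length_eq)

lemma card_tuples: "finite A \<Longrightarrow> card (tuples A n) = card A ^ n"
  unfolding tuples_def by (rule card_lists_length_eq)

lemma tuples_0: "tuples A 0 = {[]}"
  by (auto simp: tuples_def)

lemma sum_tuples_Suc: "sum f (tuples A (Suc n)) = (\<Sum>a\<in>A. \<Sum>xs\<in>tuples A n. f (a # xs))"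
proof -
  have "tuples A (Suc n) = (\<lambda>(a, xs). a # xs) ` (A \<times> tuples A n)"
    unfolding tuples_def by (auto simp: image_iff length_Suc_conv)
  moreover have "inj_on (\<lambda>(a, xs). a # xs) (A \<times> tuples A n)"
    by (auto simp: inj_on_def)
  ultimately show ?thesis
    by (simp add: sum.reindex sum.cartesian_product case_prod_unfold)
qed

lemma sum_tuples_add:
  "(\<Sum>zs\<in>tuples A (m + n). g zs) = (\<Sum>xs\<in>tuples A m. \<Sum>ys\<in>tuples A n. g (xs @ ys))"
proof (induction m arbitrary: g)
  case 0
  then show ?case by (simp add: tuples_0)
next
  case (Suc m)
  have "(\<Sum>zs\<in>tuples A (Suc m + n). g zs) = (\<Sum>a\<in>A. \<Sum>zs\<in>tuples A (m + n). g (a # zs))"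
    by (simp only: add_Suc sum_tuples_Suc)
  also have "\<dots> = (\<Sum>a\<in>A. \<Sum>xs\<in>tuples A m. \<Sum>ys\<in>tuples A n. g (a # xs @ ys))"
    by (simp add: Suc)
  also have "\<dots> = (\<Sum>xs\<in>tuples A (Suc m). \<Sum>ys\<in>tuples A n. g (xs @ ys))"
    by (simp only: sum_tuples_Suc append_Cons)
  finally show ?case .
qed

lemma sum_tuples_prod_nth:
  fixes f :: "nat \<Rightarrow> 'a \<Rightarrow> real"
  shows "(\<Sum>xs\<in>tuples A n. \<Prod>j<n. f j (xs ! j)) = (\<Prod>j<n. \<Sum>a\<in>A. f j a)"
proof (induction n arbitrary: f)
  case 0
  then show ?case by (simp add: tuples_0)
next
  case (Suc n)
  have "(\<Sum>xs\<in>tuples A (Suc n). \<Prod>j<Suc n. f j (xs ! j))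
      = (\<Sum>a\<in>A. \<Sum>xs\<in>tuples A n. f 0 a * (\<Prod>j<n. f (Suc j) (xs ! j)))"
    by (simp only: sum_tuples_Suc prod.lessThan_Suc_shift nth_Cons_0 nth_Cons_Suc)
  also have "\<dots> = (\<Sum>a\<in>A. f 0 a) * (\<Prod>j<n. \<Sum>a\<in>A. f (Suc j) a)"
    by (simp add: sum_product[symmetric] Suc[of "\<lambda>j. f (Suc j)"])
  also have "\<dots> = (\<Prod>j<Suc n. \<Sum>a\<in>A. f j a)"
    by (simp only: prod.lessThan_Suc_shift)
  finally show ?case .
qed

lemma sum_tuples_take_nth:
  fixes f :: "'a list \<Rightarrow> 'a \<Rightarrow> real"
  assumes "finite A" "i < k"
  shows "(\<Sum>xs\<in>tuples A k. f (take i xs) (xs ! i))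
       = real (card A) ^ (k - i - 1) * (\<Sum>ys\<in>tuples A i. \<Sum>a\<in>A. f ys a)"
proof -
  have k: "k = i + Suc (k - i - 1)" using assms by simp
  have "(\<Sum>xs\<in>tuples A k. f (take i xs) (xs ! i))
      = (\<Sum>ys\<in>tuples A i. \<Sum>zs\<in>tuples A (Suc (k - i - 1)). f (take i (ys @ zs)) ((ys @ zs) ! i))"
    by (subst k) (rule sum_tuples_add)
  also have "\<dots> = (\<Sum>ys\<in>tuples A i. \<Sum>zs\<in>tuples A (Suc (k - i - 1)). f ys (zs ! 0))"
    by (intro sum.cong refl) (auto simp: tuples_def nth_append)
  also have "\<dots> = (\<Sum>ys\<in>tuples A i. \<Sum>a\<in>A. real (card A) ^ (k - i - 1) * f ys a)"
    using assms(1) by (simp add: sum_tuples_Suc card_tuples)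
  finally show ?thesis
    by (simp add: sum_distrib_left)
qed

lemma sum_diff_shift_le:
  fixes K :: "nat \<Rightarrow> real"
  assumes "\<And>m. m \<le> l + i \<Longrightarrow> 0 \<le> K m \<and> K m \<le> c"
  shows "(\<Sum>t<l. K t - K (t + i)) \<le> real i * c"
  using assms
proof (induction i)
  case 0
  then show ?case by simp
next
  case (Suc i)
  have "(\<Sum>t<l. K t - K (t + Suc i)) = (\<Sum>t<l. K t - K (t + i)) + (\<Sum>t<l. K (i + t) - K (Suc (i + t)))"
    by (simp add: sum.distrib[symmetric] algebra_simps)
  also have "(\<Sum>t<l. K (i + t) - K (Suc (i + t))) = K i - K (i + l)"
    using sum_lessThan_telescope'[of "\<lambda>n. K (i + n)" l] by simp
  also have "K i - K (i + l) \<le> c"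
    using Suc.prems[of i] Suc.prems[of "i + l"] by simp
  finally show ?case
    using Suc by (simp add: algebra_simps)
qed

lemma ex_le_average:
  fixes f :: "nat \<Rightarrow> real"
  assumes "0 < l" "(\<Sum>t<l. f t) \<le> B"
  shows "\<exists>t<l. f t \<le> B / real l"
proof (rule ccontr)
  assume "\<not> ?thesis"
  then have "(\<Sum>t<l. B / real l) < (\<Sum>t<l. f t)"
    using assms(1) by (intro sum_strict_mono) (auto simp: not_le)
  then show False
    using assms by simp
qed

section \<open>Total correlation\<close>

lemma gibbs_inequality:
  fixes p Q :: "'b \<Rightarrow> real"
  assumes "finite I" "sum p I = 1" "sum Q I = c" "0 < c"
    and "\<And>i. i \<in> I \<Longrightarrow> 0 \<le> p i" "\<And>i. i \<in> I \<Longrightarrow> 0 \<le> Q i"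
    and "\<And>i. i \<in> I \<Longrightarrow> 0 < p i \<Longrightarrow> 0 < Q i"
  shows "- (\<Sum>i\<in>I. p i * ln (p i / Q i)) \<le> ln c"
proof -
  have term_le: "- (p i * ln (p i / Q i)) - p i * ln c \<le> Q i / c - p i" if i: "i \<in> I" for i
  proof (cases "p i = 0")
    case True
    then show ?thesis using assms(4) assms(6)[OF i] by simp
  next
    case False
    then have p: "0 < p i" using assms(5)[OF i] by simp
    then have Q: "0 < Q i" using assms(7)[OF i] by simp
    have "ln (Q i / (c * p i)) \<le> Q i / (c * p i) - 1"
      using p Q assms(4) by (intro ln_le_minus_one) simp
    then have "p i * ln (Q i / (c * p i)) \<le> Q i / c - p i"
      using p assms(4) by (simp add: field_simps mult_left_mono)
    moreover have "ln (Q i / (c * p i)) = - ln (p i / Q i) - ln c"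
      using p Q assms(4) by (simp add: ln_divide_pos ln_mult)
    ultimately show ?thesis by (simp add: algebra_simps)
  qed
  have "- (\<Sum>i\<in>I. p i * ln (p i / Q i)) - ln c = (\<Sum>i\<in>I. - (p i * ln (p i / Q i)) - p i * ln c)"
    using assms(2) by (simp add: sum_subtractf sum_negf sum_distrib_right[symmetric])
  also have "\<dots> \<le> (\<Sum>i\<in>I. Q i / c - p i)"
    by (rule sum_mono) (rule term_le)
  also have "\<dots> = 0"
    using assms(2-4) by (simp add: sum_subtractf sum_divide_distrib[symmetric])
  finally show ?thesis by simp
qed

lemma sum_joint_law_mult:
  assumes "finite \<Sigma>"
  shows "(\<Sum>a\<in>tuples \<Sigma> (length xs). joint_law Y \<Sigma> xs a * g a)
       = (\<Sum>\<psi>\<in>set xs \<rightarrow>\<^sub>E \<Sigma>. Y (set xs) \<psi> * g (map \<psi> xs))"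
proof -
  have "map \<psi> xs \<in> tuples \<Sigma> (length xs)" if "\<psi> \<in> set xs \<rightarrow>\<^sub>E \<Sigma>" for \<psi>
    using that by (auto simp: tuples_def PiE_iff)
  then have "(\<Sum>\<psi>\<in>set xs \<rightarrow>\<^sub>E \<Sigma>. Y (set xs) \<psi> * g (map \<psi> xs)) =
      (\<Sum>a\<in>tuples \<Sigma> (length xs). \<Sum>\<psi>\<in>{\<psi>. \<psi> \<in> set xs \<rightarrow>\<^sub>E \<Sigma> \<and> map \<psi> xs = a}. Y (set xs) \<psi> * g (map \<psi> xs))"
    using assms by (intro sum.group[symmetric]) (auto simp: finite_PiE finite_tuples)
  also have "\<dots> = (\<Sum>a\<in>tuples \<Sigma> (length xs). joint_law Y \<Sigma> xs a * g a)"
    unfolding joint_law_def by (rule sum.cong) (auto simp: sum_distrib_right)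
  finally show ?thesis by simp
qed

lemma joint_law_map:
  assumes "\<psi> \<in> set xs \<rightarrow>\<^sub>E \<Sigma>"
  shows "joint_law Y \<Sigma> xs (map \<psi> xs) = Y (set xs) \<psi>"
proof -
  have "{\<phi> \<in> set xs \<rightarrow>\<^sub>E \<Sigma>. map \<phi> xs = map \<psi> xs} = {\<psi>}"
    using assms by (auto intro: PiE_ext simp: map_eq_conv)
  then show ?thesis unfolding joint_law_def by simp
qed

lemma joint_law_nonneg:
  assumes "\<forall>\<psi>\<in>set xs \<rightarrow>\<^sub>E \<Sigma>. 0 \<le> Y (set xs) \<psi>"
  shows "0 \<le> joint_law Y \<Sigma> xs a"
  unfolding joint_law_def using assms by (auto intro: sum_nonneg)

lemma coord_law_nonneg:
  assumes "\<forall>\<psi>\<in>set xs \<rightarrow>\<^sub>E \<Sigma>. 0 \<le> Y (set xs) \<psi>"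
  shows "0 \<le> coord_law Y \<Sigma> xs j b"
  unfolding coord_law_def using assms by (auto intro: sum_nonneg)

lemma coord_law_pos:
  assumes "finite \<Sigma>" "\<forall>\<psi>\<in>set xs \<rightarrow>\<^sub>E \<Sigma>. 0 \<le> Y (set xs) \<psi>"
    and "0 < joint_law Y \<Sigma> xs a" "j < length xs"
  shows "0 < coord_law Y \<Sigma> xs j (a ! j)"
proof -
  have "joint_law Y \<Sigma> xs a \<le> coord_law Y \<Sigma> xs j (a ! j)"
    unfolding joint_law_def coord_law_def
    using assms by (intro sum_mono2) (auto simp: finite_PiE)
  then show ?thesis using assms(3) by linarith
qed

lemma sum_coord_law:
  assumes "finite \<Sigma>" "j < length xs"
  shows "(\<Sum>b\<in>\<Sigma>. coord_law Y \<Sigma> xs j b) = (\<Sum>\<psi>\<in>set xs \<rightarrow>\<^sub>E \<Sigma>. Y (set xs) \<psi>)"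
  unfolding coord_law_def
  using assms by (intro sum.group) (auto simp: finite_PiE PiE_iff)

lemma total_corr_eq_sum_ln:
  assumes "finite \<Sigma>" and nonneg: "\<forall>\<psi>\<in>set xs \<rightarrow>\<^sub>E \<Sigma>. 0 \<le> Y (set xs) \<psi>"
  shows "total_corr Y \<Sigma> xs = (\<Sum>\<psi>\<in>set xs \<rightarrow>\<^sub>E \<Sigma>. Y (set xs) \<psi> *
     (ln (Y (set xs) \<psi>) - (\<Sum>j<length xs. ln (coord_law Y \<Sigma> xs j (\<psi> (xs ! j))))))"
proof -
  let ?J = "joint_law Y \<Sigma> xs"
  let ?g = "\<lambda>a. ln (?J a) - (\<Sum>j<length xs. ln (coord_law Y \<Sigma> xs j (a ! j)))"
  have "(if 0 < ?J a then ?J a * ln (?J a / (\<Prod>j<length xs. coord_law Y \<Sigma> xs j (a ! j))) else 0)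
      = ?J a * ?g a" for a
  proof (cases "0 < ?J a")
    case True
    then have pos: "\<And>j. j \<in> {..<length xs} \<Longrightarrow> 0 < coord_law Y \<Sigma> xs j (a ! j)"
      using coord_law_pos[where Y=Y and xs=xs, OF assms] by simp
    then have "ln (\<Prod>j<length xs. coord_law Y \<Sigma> xs j (a ! j)) = (\<Sum>j<length xs. ln (coord_law Y \<Sigma> xs j (a ! j)))"
      by (intro ln_prod) force+
    moreover have "0 < (\<Prod>j<length xs. coord_law Y \<Sigma> xs j (a ! j))"
      using pos by (intro prod_pos) simp
    ultimately show ?thesis
      using True by (simp add: ln_divide_pos)
  next
    case False
    then show ?thesis using joint_law_nonneg[where Y=Y and xs=xs, OF nonneg, of a] by simp
  qed
  then have "total_corr Y \<Sigma> xs = (\<Sum>a\<in>tuples \<Sigma> (length xs). ?J a * ?g a)"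
    unfolding total_corr_def by simp
  also have "\<dots> = (\<Sum>\<psi>\<in>set xs \<rightarrow>\<^sub>E \<Sigma>. Y (set xs) \<psi> * ?g (map \<psi> xs))"
    by (rule sum_joint_law_mult[OF assms(1)])
  finally show ?thesis
    by (simp add: joint_law_map)
qed

lemma total_corr_nonneg:
  assumes "finite \<Sigma>" and nonneg: "\<forall>\<psi>\<in>set xs \<rightarrow>\<^sub>E \<Sigma>. 0 \<le> Y (set xs) \<psi>"
    and sum_1: "(\<Sum>\<psi>\<in>set xs \<rightarrow>\<^sub>E \<Sigma>. Y (set xs) \<psi>) = 1"
  shows "0 \<le> total_corr Y \<Sigma> xs"
proof -
  let ?J = "joint_law Y \<Sigma> xs"
  let ?Q = "\<lambda>a. \<Prod>j<length xs. coord_law Y \<Sigma> xs j (a ! j)"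
  have "- (\<Sum>a\<in>tuples \<Sigma> (length xs). ?J a * ln (?J a / ?Q a)) \<le> ln 1"
  proof (rule gibbs_inequality)
    show "(\<Sum>a\<in>tuples \<Sigma> (length xs). ?J a) = 1"
      using sum_joint_law_mult[OF assms(1), of Y xs "\<lambda>_. 1"] sum_1 by simp
    show "(\<Sum>a\<in>tuples \<Sigma> (length xs). ?Q a) = 1"
      using sum_tuples_prod_nth[of "coord_law Y \<Sigma> xs"] sum_coord_law[OF assms(1), of _ xs Y] sum_1
      by simp
    show "0 < ?Q a" if "0 < ?J a" for a
      using coord_law_pos[where Y=Y and xs=xs, OF assms(1,2) that] by (auto intro: prod_pos)
  qed (use assms(1) joint_law_nonneg[where Y=Y and xs=xs, OF nonneg]
         coord_law_nonneg[where Y=Y and xs=xs, OF nonneg] in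
       \<open>auto simp: finite_tuples prod_nonneg\<close>)
  moreover have "total_corr Y \<Sigma> xs = (\<Sum>a\<in>tuples \<Sigma> (length xs). ?J a * ln (?J a / ?Q a))"
    unfolding total_corr_def
  proof (rule sum.cong[OF refl])
    fix a
    show "(if 0 < ?J a then ?J a * ln (?J a / ?Q a) else 0) = ?J a * ln (?J a / ?Q a)"
      using joint_law_nonneg[where Y=Y and xs=xs, OF nonneg, of a] by auto
  qed
  ultimately show ?thesis by simp
qed

section \<open>Sherali--Adams solutions and conditioning\<close>

lemma merge_PiE:
  assumes "\<psi> \<in> A \<rightarrow>\<^sub>E \<Sigma>" "\<phi> \<in> T \<rightarrow>\<^sub>E \<Sigma>"
  shows "merge A \<psi> \<phi> \<in> (A \<union> T) \<rightarrow>\<^sub>E \<Sigma>"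
  using assms unfolding merge_def by (auto simp: PiE_iff extensional_def)

lemma restrict_merge_left:
  assumes "\<psi> \<in> A \<rightarrow>\<^sub>E \<Sigma>"
  shows "restrict (merge A \<psi> \<phi>) A = \<psi>"
  using assms unfolding merge_def by (auto simp: PiE_iff extensional_def restrict_def)

lemma restrict_merge_right:
  assumes "\<psi> \<in> A \<rightarrow>\<^sub>E \<Sigma>" "\<phi> \<in> T \<rightarrow>\<^sub>E \<Sigma>" "\<forall>x\<in>A \<inter> T. \<psi> x = \<phi> x"
  shows "restrict (merge A \<psi> \<phi>) T = \<phi>"
  using assms unfolding merge_def by (auto simp: PiE_iff extensional_def restrict_def)

lemma merge_restrict:
  assumes "\<chi> \<in> (A \<union> T) \<rightarrow>\<^sub>E \<Sigma>" "restrict \<chi> T = \<phi>"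
  shows "merge A (restrict \<chi> A) \<phi> = \<chi>"
proof
  fix x
  show "merge A (restrict \<chi> A) \<phi> x = \<chi> x"
    using assms unfolding merge_def by (auto simp: PiE_iff extensional_def restrict_def)
qed

lemma sum_PiE_insert_restrict:
  assumes "a \<notin> U"
  shows "(\<Sum>\<zeta>\<in>insert a U \<rightarrow>\<^sub>E \<Sigma>. g (restrict \<zeta> U)) = real (card \<Sigma>) * (\<Sum>\<phi>\<in>U \<rightarrow>\<^sub>E \<Sigma>. g \<phi>)"
proof -
  have "restrict (f(a := b)) U = f" if "f \<in> U \<rightarrow>\<^sub>E \<Sigma>" for f b
    using that assms by (auto simp: fun_eq_iff PiE_iff extensional_def)
  then have "(\<Sum>\<zeta>\<in>insert a U \<rightarrow>\<^sub>E \<Sigma>. g (restrict \<zeta> U)) = (\<Sum>(b, f)\<in>\<Sigma> \<times> (U \<rightarrow>\<^sub>E \<Sigma>). g f)"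
    unfolding PiE_insert_eq
    by (subst sum.reindex[OF inj_combinator[OF assms]]) (auto intro!: sum.cong)
  also have "\<dots> = real (card \<Sigma>) * (\<Sum>\<phi>\<in>U \<rightarrow>\<^sub>E \<Sigma>. g \<phi>)"
    by (simp add: sum.cartesian_product[symmetric])
  finally show ?thesis .
qed

locale sa_solution =
  fixes r :: nat and V :: "'v set" and \<Sigma> :: "'a set" and X :: "'v set \<Rightarrow> ('v \<Rightarrow> 'a) \<Rightarrow> real"
  assumes sherali_adams: "sherali_adams r V \<Sigma> X"
    and finite_variables: "finite V" and finite_alphabet: "finite \<Sigma>"
begin

lemma local_nonneg: "S \<subseteq> V \<Longrightarrow> card S \<le> r \<Longrightarrow> \<phi> \<in> S \<rightarrow>\<^sub>E \<Sigma> \<Longrightarrow> 0 \<le> X S \<phi>"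
  using sherali_adams unfolding sherali_adams_def is_distr_def by auto

lemma local_sum: "S \<subseteq> V \<Longrightarrow> card S \<le> r \<Longrightarrow> (\<Sum>\<phi>\<in>S \<rightarrow>\<^sub>E \<Sigma>. X S \<phi>) = 1"
  using sherali_adams unfolding sherali_adams_def is_distr_def by auto

lemma marginals_agree:
  "S1 \<subseteq> V \<Longrightarrow> S2 \<subseteq> V \<Longrightarrow> card S1 \<le> r \<Longrightarrow> card S2 \<le> r \<Longrightarrow> \<psi> \<in> (S1 \<inter> S2) \<rightarrow>\<^sub>E \<Sigma>
    \<Longrightarrow> marg X \<Sigma> S1 (S1 \<inter> S2) \<psi> = marg X \<Sigma> S2 (S1 \<inter> S2) \<psi>"
  using sherali_adams unfolding sherali_adams_def by blast

lemma card_le_level: "A \<subseteq> B \<Longrightarrow> B \<subseteq> V \<Longrightarrow> card B \<le> r \<Longrightarrow> card A \<le> r"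
  using finite_variables by (meson card_mono finite_subset order_trans)

lemma finite_assignments: "A \<subseteq> V \<Longrightarrow> finite (A \<rightarrow>\<^sub>E \<Sigma>)"
  using finite_variables finite_alphabet by (simp add: finite_PiE finite_subset)

definition extensions :: "'v set \<Rightarrow> 'v set \<Rightarrow> ('v \<Rightarrow> 'a) \<Rightarrow> ('v \<Rightarrow> 'a) set" where
  "extensions B A \<psi> = {\<chi> \<in> B \<rightarrow>\<^sub>E \<Sigma>. restrict \<chi> A = \<psi>}"

lemma finite_extensions: "B \<subseteq> V \<Longrightarrow> finite (extensions B A \<psi>)"
  unfolding extensions_def by (rule finite_subset[OF _ finite_assignments]) auto

lemma sum_extensions:
  assumes "A \<subseteq> B" "B \<subseteq> V" "card B \<le> r" "\<psi> \<in> A \<rightarrow>\<^sub>E \<Sigma>"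
  shows "(\<Sum>\<chi>\<in>extensions B A \<psi>. X B \<chi>) = X A \<psi>"
proof -
  have "card A \<le> r"
    using assms(1-3) by (rule card_le_level)
  moreover have B_A: "B \<inter> A = A"
    using assms(1) by blast
  ultimately have "marg X \<Sigma> B A \<psi> = marg X \<Sigma> A A \<psi>"
    using marginals_agree[of B A \<psi>] assms by simp
  moreover have "{\<phi> \<in> A \<rightarrow>\<^sub>E \<Sigma>. restrict \<phi> A = \<psi>} = {\<psi>}"
    using assms(4) by auto
  ultimately show ?thesis
    unfolding marg_def extensions_def by simp
qed

lemma sum_local_restrict:
  assumes "A \<subseteq> B" "B \<subseteq> V" "card B \<le> r"
  shows "(\<Sum>\<chi>\<in>B \<rightarrow>\<^sub>E \<Sigma>. X B \<chi> * g (restrict \<chi> A)) = (\<Sum>\<psi>\<in>A \<rightarrow>\<^sub>E \<Sigma>. X A \<psi> * g \<psi>)"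
proof -
  have "(\<Sum>\<chi>\<in>B \<rightarrow>\<^sub>E \<Sigma>. X B \<chi> * g (restrict \<chi> A)) =
     (\<Sum>\<psi>\<in>A \<rightarrow>\<^sub>E \<Sigma>. \<Sum>\<chi>\<in>extensions B A \<psi>. X B \<chi> * g (restrict \<chi> A))"
    unfolding extensions_def using assms
    by (intro sum.group[symmetric]) (auto simp: finite_assignments PiE_iff)
  also have "\<dots> = (\<Sum>\<psi>\<in>A \<rightarrow>\<^sub>E \<Sigma>. (\<Sum>\<chi>\<in>extensions B A \<psi>. X B \<chi>) * g \<psi>)"
    by (rule sum.cong) (auto simp: sum_distrib_right extensions_def)
  finally show ?thesis
    by (simp add: sum_extensions[OF assms])
qed

lemma local_le_restrict:
  assumes "A \<subseteq> B" "B \<subseteq> V" "card B \<le> r" "\<chi> \<in> B \<rightarrow>\<^sub>E \<Sigma>"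
  shows "X B \<chi> \<le> X A (restrict \<chi> A)"
proof -
  have "X B \<chi> \<le> (\<Sum>\<chi>'\<in>extensions B A (restrict \<chi> A). X B \<chi>')"
    using assms by (intro member_le_sum) (auto simp: extensions_def local_nonneg finite_assignments)
  also have "\<dots> = X A (restrict \<chi> A)"
    using assms by (intro sum_extensions) (auto simp: PiE_iff)
  finally show ?thesis .
qed

lemma sum_consistent_eq_sum_extensions:
  assumes "\<phi> \<in> T \<rightarrow>\<^sub>E \<Sigma>" "A \<subseteq> V"
  shows "(\<Sum>\<psi>\<in>A \<rightarrow>\<^sub>E \<Sigma>. if \<forall>x\<in>A \<inter> T. \<psi> x = \<phi> x then F \<psi> else 0)
       = (\<Sum>\<chi>\<in>extensions (A \<union> T) T \<phi>. F (restrict \<chi> A))"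
proof -
  have "(\<Sum>\<psi>\<in>A \<rightarrow>\<^sub>E \<Sigma>. if \<forall>x\<in>A \<inter> T. \<psi> x = \<phi> x then F \<psi> else 0)
      = (\<Sum>\<psi>\<in>{\<psi>\<in>A \<rightarrow>\<^sub>E \<Sigma>. \<forall>x\<in>A \<inter> T. \<psi> x = \<phi> x}. F \<psi>)"
    using assms(2) by (simp add: sum.inter_filter finite_assignments)
  also have "\<dots> = (\<Sum>\<chi>\<in>extensions (A \<union> T) T \<phi>. F (restrict \<chi> A))"
  proof (rule sum.reindex_bij_witness[where i="\<lambda>\<chi>. restrict \<chi> A" and j="\<lambda>\<psi>. merge A \<psi> \<phi>"])
    fix \<psi> assume "\<psi> \<in> {\<psi> \<in> A \<rightarrow>\<^sub>E \<Sigma>. \<forall>x\<in>A \<inter> T. \<psi> x = \<phi> x}"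
    then show "restrict (merge A \<psi> \<phi>) A = \<psi>" "F (restrict (merge A \<psi> \<phi>) A) = F \<psi>"
      and "merge A \<psi> \<phi> \<in> extensions (A \<union> T) T \<phi>"
      using assms(1) by (auto simp: extensions_def restrict_merge_left merge_PiE restrict_merge_right)
  next
    fix \<chi> assume "\<chi> \<in> extensions (A \<union> T) T \<phi>"
    then show "merge A (restrict \<chi> A) \<phi> = \<chi>"
      and "restrict \<chi> A \<in> {\<psi> \<in> A \<rightarrow>\<^sub>E \<Sigma>. \<forall>x\<in>A \<inter> T. \<psi> x = \<phi> x}"
      by (auto simp: extensions_def merge_restrict PiE_iff)
  qed
  finally show ?thesis .
qed

lemma sum_cond_mult:
  assumes "\<phi> \<in> T \<rightarrow>\<^sub>E \<Sigma>" "A \<subseteq> V"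
  shows "(\<Sum>\<psi>\<in>A \<rightarrow>\<^sub>E \<Sigma>. cond X T \<phi> A \<psi> * G \<psi>)
       = (\<Sum>\<chi>\<in>extensions (A \<union> T) T \<phi>. X (A \<union> T) \<chi> * G (restrict \<chi> A)) / X T \<phi>"
proof -
  have "(\<Sum>\<psi>\<in>A \<rightarrow>\<^sub>E \<Sigma>. cond X T \<phi> A \<psi> * G \<psi>)
      = (\<Sum>\<psi>\<in>A \<rightarrow>\<^sub>E \<Sigma>. if \<forall>x\<in>A \<inter> T. \<psi> x = \<phi> x
           then X (A \<union> T) (merge A \<psi> \<phi>) / X T \<phi> * G \<psi> else 0)"
    unfolding cond_def by (rule sum.cong) auto
  also have "\<dots> = (\<Sum>\<chi>\<in>extensions (A \<union> T) T \<phi>.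
      X (A \<union> T) (merge A (restrict \<chi> A) \<phi>) / X T \<phi> * G (restrict \<chi> A))"
    by (rule sum_consistent_eq_sum_extensions[OF assms])
  also have "\<dots> = (\<Sum>\<chi>\<in>extensions (A \<union> T) T \<phi>. X (A \<union> T) \<chi> * G (restrict \<chi> A)) / X T \<phi>"
    unfolding sum_divide_distrib by (rule sum.cong) (auto simp: extensions_def merge_restrict)
  finally show ?thesis .
qed

lemma cond_restrict:
  assumes "\<chi> \<in> extensions (A \<union> T) T \<phi>"
  shows "cond X T \<phi> A (restrict \<chi> A) = X (A \<union> T) \<chi> / X T \<phi>"
proof -
  have "\<forall>x\<in>A \<inter> T. restrict \<chi> A x = \<phi> x"
    using assms unfolding extensions_def by auto
  moreover have "merge A (restrict \<chi> A) \<phi> = \<chi>"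
    using assms unfolding extensions_def by (auto intro: merge_restrict)
  ultimately show ?thesis
    unfolding cond_def by simp
qed

lemma cond_nonneg:
  assumes "T \<subseteq> V" "A \<subseteq> V" "card (A \<union> T) \<le> r" "\<phi> \<in> T \<rightarrow>\<^sub>E \<Sigma>" "\<psi> \<in> A \<rightarrow>\<^sub>E \<Sigma>"
  shows "0 \<le> cond X T \<phi> A \<psi>"
proof -
  have "card T \<le> r"
    using assms by (intro card_le_level[of T "A \<union> T"]) auto
  then have "0 \<le> X T \<phi>"
    using assms by (simp add: local_nonneg)
  moreover have "0 \<le> X (A \<union> T) (merge A \<psi> \<phi>)"
    using assms merge_PiE[OF assms(5,4)] by (intro local_nonneg) auto
  ultimately show ?thesis
    unfolding cond_def by simp
qed

lemma sum_cond:
  assumes "T \<subseteq> V" "A \<subseteq> V" "card (A \<union> T) \<le> r" "\<phi> \<in> T \<rightarrow>\<^sub>E \<Sigma>" "0 < X T \<phi>"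
  shows "(\<Sum>\<psi>\<in>A \<rightarrow>\<^sub>E \<Sigma>. cond X T \<phi> A \<psi>) = 1"
  using sum_cond_mult[OF assms(4,2), of "\<lambda>_. 1"] sum_extensions[of T "A \<union> T" \<phi>] assms by simp

lemma extensions_agreeing_at:
  assumes "\<chi> \<in> extensions B T \<phi>"
  shows "{\<chi>' \<in> extensions B T \<phi>. \<chi>' x = \<chi> x} = extensions B (insert x T) (restrict \<chi> (insert x T))"
  using assms unfolding extensions_def by (auto simp: fun_eq_iff restrict_def split: if_splits)

lemma coord_law_cond:
  assumes "T \<subseteq> V" "set xs \<subseteq> V" "card (set xs \<union> T) \<le> r"
    and "j < length xs" "\<chi> \<in> extensions (set xs \<union> T) T \<phi>"
  shows "coord_law (cond X T \<phi>) \<Sigma> xs j (\<chi> (xs ! j))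
       = X (insert (xs ! j) T) (restrict \<chi> (insert (xs ! j) T)) / X T \<phi>"
proof -
  let ?B = "set xs \<union> T" and ?x = "xs ! j"
  have \<phi>: "\<phi> \<in> T \<rightarrow>\<^sub>E \<Sigma>" and \<chi>: "\<chi> \<in> ?B \<rightarrow>\<^sub>E \<Sigma>"
    using assms(5) by (auto simp: extensions_def)
  have x: "?x \<in> set xs" using assms(4) by simp
  have "coord_law (cond X T \<phi>) \<Sigma> xs j (\<chi> ?x)
      = (\<Sum>\<psi>\<in>set xs \<rightarrow>\<^sub>E \<Sigma>. cond X T \<phi> (set xs) \<psi> * (if \<psi> ?x = \<chi> ?x then 1 else 0))"
    unfolding coord_law_def using assms(2)
    by (simp add: sum.inter_filter finite_assignments if_distrib cong: if_cong)
  also have "\<dots> = (\<Sum>\<chi>'\<in>extensions ?B T \<phi>. X ?B \<chi>' * (if \<chi>' ?x = \<chi> ?x then 1 else 0)) / X T \<phi>"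
    using sum_cond_mult[OF \<phi> assms(2)] x by simp
  also have "\<dots> = (\<Sum>\<chi>'\<in>{\<chi>' \<in> extensions ?B T \<phi>. \<chi>' ?x = \<chi> ?x}. X ?B \<chi>') / X T \<phi>"
    using assms(1,2) by (simp add: sum.inter_filter finite_extensions if_distrib cong: if_cong)
  also have "\<dots> = X (insert ?x T) (restrict \<chi> (insert ?x T)) / X T \<phi>"
    unfolding extensions_agreeing_at[OF assms(5)]
    using assms(1-3) x \<chi> by (subst sum_extensions) (auto simp: PiE_iff)
  finally show ?thesis .
qed

lemma total_corr_cond:
  assumes "T \<subseteq> V" "set xs \<subseteq> V" "card (set xs \<union> T) \<le> r"
    and "\<phi> \<in> T \<rightarrow>\<^sub>E \<Sigma>"
  shows "total_corr (cond X T \<phi>) \<Sigma> xs =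
    (\<Sum>\<chi>\<in>extensions (set xs \<union> T) T \<phi>. X (set xs \<union> T) \<chi> *
       (ln (X (set xs \<union> T) \<chi> / X T \<phi>) -
        (\<Sum>j<length xs. ln (X (insert (xs ! j) T) (restrict \<chi> (insert (xs ! j) T)) / X T \<phi>)))) / X T \<phi>"
proof -
  let ?Y = "cond X T \<phi>"
  have "total_corr ?Y \<Sigma> xs = (\<Sum>\<psi>\<in>set xs \<rightarrow>\<^sub>E \<Sigma>. ?Y (set xs) \<psi> *
     (ln (?Y (set xs) \<psi>) - (\<Sum>j<length xs. ln (coord_law ?Y \<Sigma> xs j (\<psi> (xs ! j))))))"
    using assms by (intro total_corr_eq_sum_ln finite_alphabet ballI cond_nonneg)
  also have "\<dots> = (\<Sum>\<chi>\<in>extensions (set xs \<union> T) T \<phi>. X (set xs \<union> T) \<chi> *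
     (ln (?Y (set xs) (restrict \<chi> (set xs))) -
      (\<Sum>j<length xs. ln (coord_law ?Y \<Sigma> xs j (restrict \<chi> (set xs) (xs ! j)))))) / X T \<phi>"
    by (rule sum_cond_mult[OF assms(4,2)])
  also have "\<dots> = (\<Sum>\<chi>\<in>extensions (set xs \<union> T) T \<phi>. X (set xs \<union> T) \<chi> *
       (ln (X (set xs \<union> T) \<chi> / X T \<phi>) -
        (\<Sum>j<length xs. ln (X (insert (xs ! j) T) (restrict \<chi> (insert (xs ! j) T)) / X T \<phi>)))) / X T \<phi>"
  proof (intro arg_cong[where f="\<lambda>s. s / X T \<phi>"] sum.cong refl)
    fix \<chi> assume \<chi>: "\<chi> \<in> extensions (set xs \<union> T) T \<phi>"
    have "coord_law ?Y \<Sigma> xs j (restrict \<chi> (set xs) (xs ! j))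
        = X (insert (xs ! j) T) (restrict \<chi> (insert (xs ! j) T)) / X T \<phi>" if "j < length xs" for j
      using coord_law_cond[OF assms(1-3) that \<chi>] that by simp
    then show "X (set xs \<union> T) \<chi> * (ln (?Y (set xs) (restrict \<chi> (set xs))) -
        (\<Sum>j<length xs. ln (coord_law ?Y \<Sigma> xs j (restrict \<chi> (set xs) (xs ! j)))))
      = X (set xs \<union> T) \<chi> * (ln (X (set xs \<union> T) \<chi> / X T \<phi>) -
        (\<Sum>j<length xs. ln (X (insert (xs ! j) T) (restrict \<chi> (insert (xs ! j) T)) / X T \<phi>)))"
      by (simp add: cond_restrict[OF \<chi>])
  qed
  finally show ?thesis .
qed

section \<open>Conditional entropy and the chain rule\<close>

definition cond_entropy :: "'v set \<Rightarrow> 'v \<Rightarrow> real" where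
  "cond_entropy U a = - (\<Sum>\<zeta>\<in>insert a U \<rightarrow>\<^sub>E \<Sigma>.
     X (insert a U) \<zeta> * ln (X (insert a U) \<zeta> / X U (restrict \<zeta> U)))"

lemma cond_entropy_nonneg:
  assumes "insert a U \<subseteq> V" "card (insert a U) \<le> r"
  shows "0 \<le> cond_entropy U a"
proof -
  let ?C = "insert a U"
  have "X ?C \<zeta> * ln (X ?C \<zeta> / X U (restrict \<zeta> U)) \<le> 0" if \<zeta>: "\<zeta> \<in> ?C \<rightarrow>\<^sub>E \<Sigma>" for \<zeta>
  proof -
    have "0 \<le> X ?C \<zeta>" "X ?C \<zeta> \<le> X U (restrict \<zeta> U)"
      using assms \<zeta> by (auto intro: local_nonneg local_le_restrict)
    then show ?thesis
      by (cases "X ?C \<zeta> = 0") (auto intro!: mult_nonneg_nonpos simp: divide_le_eq_1)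
  qed
  then show ?thesis
    unfolding cond_entropy_def by (simp add: sum_nonpos)
qed

lemma cond_entropy_le_ln_card:
  assumes "insert a U \<subseteq> V" "card (insert a U) \<le> r" "\<Sigma> \<noteq> {}"
  shows "cond_entropy U a \<le> ln (real (card \<Sigma>))"
proof (cases "a \<in> U")
  case True
  then have "cond_entropy U a = 0"
    unfolding cond_entropy_def using True by (simp only: insert_absorb) (auto intro!: sum.neutral)
  then show ?thesis
    using assms(3) finite_alphabet by (simp add: Suc_le_eq card_gt_0_iff)
next
  case False
  let ?C = "insert a U"
  have card_U: "card U \<le> r"
    using assms by (intro card_le_level[of U "insert a U"]) auto
  show ?thesis
    unfolding cond_entropy_def
  proof (rule gibbs_inequality)
    show "(\<Sum>\<zeta>\<in>?C \<rightarrow>\<^sub>E \<Sigma>. X U (restrict \<zeta> U)) = real (card \<Sigma>)"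
      using assms card_U by (simp add: sum_PiE_insert_restrict[OF False] local_sum)
    show "0 < X U (restrict \<zeta> U)" if "\<zeta> \<in> ?C \<rightarrow>\<^sub>E \<Sigma>" "0 < X ?C \<zeta>" for \<zeta>
      using that assms local_le_restrict[of U ?C \<zeta>] by (simp add: subset_insertI)
  qed (use assms card_U finite_alphabet in
       \<open>auto simp: local_sum local_nonneg finite_assignments card_gt_0_iff PiE_iff\<close>)
qed

lemma expectation_ln_ratio:
  assumes "insert a U \<subseteq> B" "B \<subseteq> V" "card B \<le> r"
  shows "(\<Sum>\<chi>\<in>B \<rightarrow>\<^sub>E \<Sigma>. X B \<chi> *
            ln (X (insert a U) (restrict \<chi> (insert a U)) / X U (restrict \<chi> U)))
       = - cond_entropy U a"
proof -
  let ?C = "insert a U"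
  have C_U: "?C \<inter> U = U" by blast
  have "(\<Sum>\<chi>\<in>B \<rightarrow>\<^sub>E \<Sigma>. X B \<chi> * ln (X ?C (restrict \<chi> ?C) / X U (restrict \<chi> U)))
      = (\<Sum>\<chi>\<in>B \<rightarrow>\<^sub>E \<Sigma>. X B \<chi> * (\<lambda>\<psi>. ln (X ?C \<psi> / X U (restrict \<psi> U))) (restrict \<chi> ?C))"
    by (simp add: C_U)
  also have "\<dots> = (\<Sum>\<psi>\<in>?C \<rightarrow>\<^sub>E \<Sigma>. X ?C \<psi> * ln (X ?C \<psi> / X U (restrict \<psi> U)))"
    by (rule sum_local_restrict[OF assms])
  finally show ?thesis
    unfolding cond_entropy_def by simp
qed

lemma ln_ratio_telescope:
  assumes "T \<subseteq> V" "set xs \<subseteq> V" "card (set xs \<union> T) \<le> r" "\<chi> \<in> (set xs \<union> T) \<rightarrow>\<^sub>E \<Sigma>"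
  shows "X (set xs \<union> T) \<chi> * ln (X (set xs \<union> T) \<chi> / X T (restrict \<chi> T))
     = (\<Sum>i<length xs. X (set xs \<union> T) \<chi> *
          ln (X (T \<union> set (take (Suc i) xs)) (restrict \<chi> (T \<union> set (take (Suc i) xs)))
              / X (T \<union> set (take i xs)) (restrict \<chi> (T \<union> set (take i xs)))))"
proof (cases "X (set xs \<union> T) \<chi> = 0")
  case False
  let ?B = "set xs \<union> T"
  define m where "m i = X (T \<union> set (take i xs)) (restrict \<chi> (T \<union> set (take i xs)))" for i
  have "0 < X ?B \<chi>"
    using False assms local_nonneg[of ?B \<chi>] by force
  moreover have "X ?B \<chi> \<le> m i" for i
    unfolding m_def using assms set_take_subset[of i xs] by (intro local_le_restrict) auto
  ultimately have m_pos: "0 < m i" for i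
    by (meson less_le_trans)
  have "m (length xs) = X ?B \<chi>"
    using assms(4) by (simp add: m_def Un_commute)
  moreover have "m 0 = X T (restrict \<chi> T)"
    by (simp add: m_def)
  moreover have "(\<Sum>i<length xs. ln (m (Suc i) / m i)) = ln (m (length xs)) - ln (m 0)"
    using m_pos by (simp add: ln_divide_pos sum_lessThan_telescope[of "\<lambda>i. ln (m i)"])
  ultimately have "(\<Sum>i<length xs. X ?B \<chi> * ln (m (Suc i) / m i)) = X ?B \<chi> * ln (X ?B \<chi> / X T (restrict \<chi> T))"
    using m_pos[of 0] m_pos[of "length xs"] by (simp add: sum_distrib_left[symmetric] ln_divide_pos)
  then show ?thesis
    unfolding m_def by simp
qed simp

definition corr_density :: "'v set \<Rightarrow> 'v list \<Rightarrow> ('v \<Rightarrow> 'a) \<Rightarrow> real" where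
  "corr_density T xs \<chi> = X (set xs \<union> T) \<chi> *
     (ln (X (set xs \<union> T) \<chi> / X T (restrict \<chi> T)) -
      (\<Sum>j<length xs. ln (X (insert (xs ! j) T) (restrict \<chi> (insert (xs ! j) T)) / X T (restrict \<chi> T))))"

lemma weighted_total_corr_cond:
  assumes "T \<subseteq> V" "set xs \<subseteq> V" "card (set xs \<union> T) \<le> r" "\<phi> \<in> T \<rightarrow>\<^sub>E \<Sigma>"
  shows "(if 0 < X T \<phi> then X T \<phi> * total_corr (cond X T \<phi>) \<Sigma> xs else 0)
       = (\<Sum>\<chi>\<in>extensions (set xs \<union> T) T \<phi>. corr_density T xs \<chi>)"
proof (cases "0 < X T \<phi>")
  case True
  have "restrict \<chi> T = \<phi>" if "\<chi> \<in> extensions (set xs \<union> T) T \<phi>" for \<chi>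
    using that by (simp add: extensions_def)
  then show ?thesis
    using True by (simp add: total_corr_cond[OF assms] corr_density_def cong: sum.cong)
next
  case False
  let ?B = "set xs \<union> T"
  have "card T \<le> r"
    using assms by (intro card_le_level[of T "set xs \<union> T"]) auto
  then have X_zero: "X T \<phi> = 0"
    using False assms local_nonneg[of T \<phi>] by simp
  have "X ?B \<chi> = 0" if "\<chi> \<in> extensions ?B T \<phi>" for \<chi>
    using that assms X_zero local_le_restrict[of T ?B \<chi>] local_nonneg[of ?B \<chi>]
    by (fastforce simp: extensions_def)
  then show ?thesis
    using False by (simp add: corr_density_def)
qed

lemma sum_corr_density:
  assumes "T \<subseteq> V" "set xs \<subseteq> V" "card (set xs \<union> T) \<le> r"
  shows "(\<Sum>\<chi>\<in>(set xs \<union> T) \<rightarrow>\<^sub>E \<Sigma>. corr_density T xs \<chi>)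
       = (\<Sum>i<length xs. cond_entropy T (xs ! i) - cond_entropy (T \<union> set (take i xs)) (xs ! i))"
proof -
  let ?B = "set xs \<union> T"
  let ?U = "\<lambda>i. T \<union> set (take i xs)"
  have "(\<Sum>\<chi>\<in>?B \<rightarrow>\<^sub>E \<Sigma>. corr_density T xs \<chi>)
      = (\<Sum>i<length xs. \<Sum>\<chi>\<in>?B \<rightarrow>\<^sub>E \<Sigma>. X ?B \<chi> *
           ln (X (?U (Suc i)) (restrict \<chi> (?U (Suc i))) / X (?U i) (restrict \<chi> (?U i))))
       - (\<Sum>j<length xs. \<Sum>\<chi>\<in>?B \<rightarrow>\<^sub>E \<Sigma>. X ?B \<chi> *
           ln (X (insert (xs ! j) T) (restrict \<chi> (insert (xs ! j) T)) / X T (restrict \<chi> T)))"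
    unfolding corr_density_def right_diff_distrib sum_distrib_left
    by (simp add: ln_ratio_telescope[OF assms] sum_subtractf sum.swap[of _ "{..<length xs}"] cong: sum.cong)
  also have "\<dots> = (\<Sum>i<length xs. - cond_entropy (?U i) (xs ! i)) - (\<Sum>j<length xs. - cond_entropy T (xs ! j))"
  proof (intro arg_cong2[where f="(-)"] sum.cong refl)
    fix i assume "i \<in> {..<length xs}"
    then have i: "i < length xs" by simp
    then have "?U (Suc i) = insert (xs ! i) (?U i)"
      by (auto simp: take_Suc_conv_app_nth)
    moreover have "insert (xs ! i) (?U i) \<subseteq> ?B" "insert (xs ! i) T \<subseteq> ?B"
      using i set_take_subset[of i xs] by auto
    ultimately show "(\<Sum>\<chi>\<in>?B \<rightarrow>\<^sub>E \<Sigma>. X ?B \<chi> *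
           ln (X (?U (Suc i)) (restrict \<chi> (?U (Suc i))) / X (?U i) (restrict \<chi> (?U i))))
        = - cond_entropy (?U i) (xs ! i)"
      and "(\<Sum>\<chi>\<in>?B \<rightarrow>\<^sub>E \<Sigma>. X ?B \<chi> *
           ln (X (insert (xs ! i) T) (restrict \<chi> (insert (xs ! i) T)) / X T (restrict \<chi> T)))
        = - cond_entropy T (xs ! i)"
      using assms by (simp_all add: expectation_ln_ratio)
  qed
  finally show ?thesis
    by (simp add: sum_subtractf sum_negf)
qed

definition expected_corr_cond :: "'v set \<Rightarrow> 'v list \<Rightarrow> real" where
  "expected_corr_cond T xs =
     (\<Sum>\<phi>\<in>T \<rightarrow>\<^sub>E \<Sigma>. if 0 < X T \<phi> then X T \<phi> * total_corr (cond X T \<phi>) \<Sigma> xs else 0)"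

lemma expected_corr_cond_nonneg:
  assumes "T \<subseteq> V" "set xs \<subseteq> V" "card (set xs \<union> T) \<le> r"
  shows "0 \<le> expected_corr_cond T xs"
  unfolding expected_corr_cond_def
proof (intro sum_nonneg)
  fix \<phi> assume \<phi>: "\<phi> \<in> T \<rightarrow>\<^sub>E \<Sigma>"
  have "0 \<le> total_corr (cond X T \<phi>) \<Sigma> xs" if "0 < X T \<phi>"
    using assms \<phi> that
    by (intro total_corr_nonneg finite_alphabet ballI cond_nonneg sum_cond)
  then show "0 \<le> (if 0 < X T \<phi> then X T \<phi> * total_corr (cond X T \<phi>) \<Sigma> xs else 0)"
    by simp
qed

lemma expected_corr_cond_chain_rule:
  assumes "T \<subseteq> V" "set xs \<subseteq> V" "card (set xs \<union> T) \<le> r"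
  shows "expected_corr_cond T xs
       = (\<Sum>i<length xs. cond_entropy T (xs ! i) - cond_entropy (T \<union> set (take i xs)) (xs ! i))"
proof -
  let ?B = "set xs \<union> T"
  have "expected_corr_cond T xs = (\<Sum>\<phi>\<in>T \<rightarrow>\<^sub>E \<Sigma>. \<Sum>\<chi>\<in>extensions ?B T \<phi>. corr_density T xs \<chi>)"
    unfolding expected_corr_cond_def using assms by (simp add: weighted_total_corr_cond)
  also have "\<dots> = (\<Sum>\<chi>\<in>?B \<rightarrow>\<^sub>E \<Sigma>. corr_density T xs \<chi>)"
    unfolding extensions_def using assms
    by (intro sum.group) (auto simp: finite_assignments PiE_iff)
  finally show ?thesis
    using sum_corr_density[OF assms] by simp
qed

section \<open>Averaging over the conditioning tuple\<close>

text \<open>The quantity K_m above.\<close>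
definition avg_cond_entropy :: "nat \<Rightarrow> real" where
  "avg_cond_entropy m = (\<Sum>U\<in>tuples V m. \<Sum>a\<in>V. cond_entropy (set U) a) / real (card V) ^ (m + 1)"

lemma avg_cond_entropy_bounds:
  assumes "V \<noteq> {}" "\<Sigma> \<noteq> {}" "m + 1 \<le> r"
  shows "0 \<le> avg_cond_entropy m" "avg_cond_entropy m \<le> ln (real (card \<Sigma>))"
proof -
  let ?N = "real (card V)" and ?c = "ln (real (card \<Sigma>))"
  have bounds: "0 \<le> cond_entropy (set U) a \<and> cond_entropy (set U) a \<le> ?c"
    if "U \<in> tuples V m" "a \<in> V" for U a
  proof -
    have "card (insert a (set U)) \<le> Suc (length U)"
      using card_length[of U] by (simp add: card_insert_if)
    then have "card (insert a (set U)) \<le> r"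
      using that assms(3) by (simp add: tuples_def)
    moreover have "insert a (set U) \<subseteq> V"
      using that by (simp add: tuples_def)
    ultimately show ?thesis
      using assms(2) by (simp add: cond_entropy_nonneg cond_entropy_le_ln_card)
  qed
  have "(\<Sum>U\<in>tuples V m. \<Sum>a\<in>V. cond_entropy (set U) a) \<le> (\<Sum>U\<in>tuples V m. \<Sum>a\<in>V. ?c)"
    using bounds by (intro sum_mono) auto
  also have "\<dots> = ?N ^ (m + 1) * ?c"
    using finite_variables by (simp add: card_tuples)
  finally have "(\<Sum>U\<in>tuples V m. \<Sum>a\<in>V. cond_entropy (set U) a) \<le> ?N ^ (m + 1) * ?c" .
  moreover have "0 < ?N ^ (m + 1)"
    using assms(1) finite_variables by (simp add: card_gt_0_iff)
  ultimately show "avg_cond_entropy m \<le> ?c"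
    unfolding avg_cond_entropy_def by (simp add: pos_divide_le_eq mult.commute)
  show "0 \<le> avg_cond_entropy m"
    unfolding avg_cond_entropy_def using bounds by (intro divide_nonneg_nonneg sum_nonneg) auto
qed

lemma sum_tuples_cond_entropy:
  assumes "i < k" "V \<noteq> {}"
  shows "(\<Sum>T\<in>tuples V t. \<Sum>S\<in>tuples V k. cond_entropy (set T) (S ! i))
          = real (card V) ^ (t + k) * avg_cond_entropy t"
    and "(\<Sum>T\<in>tuples V t. \<Sum>S\<in>tuples V k. cond_entropy (set T \<union> set (take i S)) (S ! i))
          = real (card V) ^ (t + k) * avg_cond_entropy (t + i)"
proof -
  let ?N = "real (card V)"
  have N_pos: "0 < ?N"
    using assms(2) finite_variables by (simp add: card_gt_0_iff)
  have "?N ^ (t + k) = ?N ^ (k - i - 1) * ?N ^ i * ?N ^ (t + 1)"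
    unfolding power_add[symmetric] using assms(1) by (intro arg_cong[where f="power ?N"]) linarith
  moreover have "(\<Sum>S\<in>tuples V k. cond_entropy (set T) (S ! i))
      = ?N ^ (k - i - 1) * ?N ^ i * (\<Sum>a\<in>V. cond_entropy (set T) a)" for T
    using sum_tuples_take_nth[OF finite_variables assms(1), of "\<lambda>_ a. cond_entropy (set T) a"]
    by (simp add: finite_variables card_tuples mult.assoc)
  ultimately show "(\<Sum>T\<in>tuples V t. \<Sum>S\<in>tuples V k. cond_entropy (set T) (S ! i))
      = ?N ^ (t + k) * avg_cond_entropy t"
    using N_pos by (simp add: avg_cond_entropy_def sum_distrib_left[symmetric])
  have "?N ^ (t + k) = ?N ^ (k - i - 1) * ?N ^ (t + i + 1)"
    unfolding power_add[symmetric] using assms(1) by (intro arg_cong[where f="power ?N"]) linarith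
  moreover have "(\<Sum>S\<in>tuples V k. cond_entropy (set T \<union> set (take i S)) (S ! i))
      = ?N ^ (k - i - 1) * (\<Sum>ys\<in>tuples V i. \<Sum>a\<in>V. cond_entropy (set (T @ ys)) a)" for T
    using sum_tuples_take_nth[OF finite_variables assms(1), of "\<lambda>ys a. cond_entropy (set T \<union> set ys) a"]
    by simp
  ultimately show "(\<Sum>T\<in>tuples V t. \<Sum>S\<in>tuples V k. cond_entropy (set T \<union> set (take i S)) (S ! i))
      = ?N ^ (t + k) * avg_cond_entropy (t + i)"
    using N_pos
    by (simp add: avg_cond_entropy_def sum_distrib_left[symmetric] sum_tuples_add)
qed
lemma sum_tuples_expected_corr_cond:
  assumes "V \<noteq> {}" "t + k \<le> r"
  shows "(\<Sum>T\<in>tuples V t. \<Sum>S\<in>tuples V k. expected_corr_cond (set T) S)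
       = real (card V) ^ (t + k) * (\<Sum>i<k. avg_cond_entropy t - avg_cond_entropy (t + i))"
proof -
  have "expected_corr_cond (set T) S
      = (\<Sum>i<k. cond_entropy (set T) (S ! i) - cond_entropy (set T \<union> set (take i S)) (S ! i))"
    if "T \<in> tuples V t" "S \<in> tuples V k" for T S
  proof -
    have "card (set S \<union> set T) \<le> length S + length T"
      using card_Un_le[of "set S" "set T"] card_length[of S] card_length[of T] by linarith
    then show ?thesis
      using that assms(2) by (simp add: tuples_def expected_corr_cond_chain_rule)
  qed
  then have "(\<Sum>T\<in>tuples V t. \<Sum>S\<in>tuples V k. expected_corr_cond (set T) S)
      = (\<Sum>i<k. \<Sum>T\<in>tuples V t. \<Sum>S\<in>tuples V k.
           cond_entropy (set T) (S ! i) - cond_entropy (set T \<union> set (take i S)) (S ! i))"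
    by (simp add: sum.swap[of _ "{..<k}"] cong: sum.cong)
  also have "\<dots> = (\<Sum>i<k. real (card V) ^ (t + k) * (avg_cond_entropy t - avg_cond_entropy (t + i)))"
    using assms(1) by (intro sum.cong refl) (simp add: sum_subtractf sum_tuples_cond_entropy right_diff_distrib)
  finally show ?thesis
    by (simp add: sum_distrib_left)
qed

lemma exp_cond_corr_eq:
  "exp_cond_corr W V \<Sigma> k X t
     = (\<Sum>T\<in>tuples V t. \<Sum>S\<in>tuples V k. W S * expected_corr_cond (set T) S) / real (card V) ^ t"
proof -
  have "(if 0 < X (set T) \<phi> then X (set T) \<phi> * csp_corr W V \<Sigma> k (cond X (set T) \<phi>) else 0)
      = (\<Sum>S\<in>tuples V k. W S *
           (if 0 < X (set T) \<phi> then X (set T) \<phi> * total_corr (cond X (set T) \<phi>) \<Sigma> S else 0))" for T \<phi>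
    by (simp add: csp_corr_def sum_distrib_left mult.left_commute)
  then show ?thesis
    unfolding exp_cond_corr_def expected_corr_cond_def
    by (simp add: sum.swap[of _ "tuples V k"] sum_distrib_left sum_divide_distrib)
qed

lemma exp_cond_corr_le:
  assumes "V \<noteq> {}" "0 < \<Delta>" "csp_dense \<Delta> V k W" "t + k \<le> r"
  shows "exp_cond_corr W V \<Sigma> k X t \<le> (\<Sum>i<k. avg_cond_entropy t - avg_cond_entropy (t + i)) / \<Delta>"
proof -
  let ?N = "real (card V)"
  have N_pos: "0 < ?N"
    using assms(1) finite_variables by (simp add: card_gt_0_iff)
  have "W S * expected_corr_cond (set T) S \<le> expected_corr_cond (set T) S / (\<Delta> * ?N ^ k)"
    if "T \<in> tuples V t" "S \<in> tuples V k" for T S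
  proof -
    have "0 \<le> expected_corr_cond (set T) S"
    proof (rule expected_corr_cond_nonneg)
      show "card (set S \<union> set T) \<le> r"
        using that assms(4) card_Un_le[of "set S" "set T"] card_length[of S] card_length[of T]
        by (simp add: tuples_def)
    qed (use that in \<open>simp_all add: tuples_def\<close>)
    moreover have "W S \<le> 1 / (\<Delta> * ?N ^ k)"
      using assms(2,3) that N_pos by (simp add: csp_dense_def field_simps)
    ultimately show ?thesis
      using mult_right_mono by fastforce
  qed
  then have "exp_cond_corr W V \<Sigma> k X t
      \<le> (\<Sum>T\<in>tuples V t. \<Sum>S\<in>tuples V k. expected_corr_cond (set T) S / (\<Delta> * ?N ^ k)) / ?N ^ t"
    unfolding exp_cond_corr_eq using N_pos by (intro divide_right_mono sum_mono) auto
  also have "\<dots> = (\<Sum>i<k. avg_cond_entropy t - avg_cond_entropy (t + i)) / \<Delta>"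
    using N_pos assms(2)
    by (simp add: sum_divide_distrib[symmetric] sum_tuples_expected_corr_cond[OF assms(1,4)] power_add)
  finally show ?thesis .
qed

lemma sum_exp_cond_corr_le:
  assumes "V \<noteq> {}" "\<Sigma> \<noteq> {}" "0 < \<Delta>" "csp_dense \<Delta> V k W" "l + k \<le> r"
  shows "(\<Sum>t<l. exp_cond_corr W V \<Sigma> k X t) \<le> real k ^ 2 * ln (real (card \<Sigma>)) / \<Delta>"
proof -
  let ?c = "ln (real (card \<Sigma>))"
  have "(\<Sum>t<l. exp_cond_corr W V \<Sigma> k X t)
      \<le> (\<Sum>t<l. (\<Sum>i<k. avg_cond_entropy t - avg_cond_entropy (t + i)) / \<Delta>)"
    using assms by (intro sum_mono exp_cond_corr_le) auto
  also have "\<dots> = (\<Sum>i<k. \<Sum>t<l. avg_cond_entropy t - avg_cond_entropy (t + i)) / \<Delta>"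
    by (simp add: sum_divide_distrib[symmetric] sum.swap[of _ "{..<l}"])
  also have "\<dots> \<le> (\<Sum>i<k. real k * ?c) / \<Delta>"
  proof (intro divide_right_mono sum_mono)
    fix i assume "i \<in> {..<k}"
    then have "(\<Sum>t<l. avg_cond_entropy t - avg_cond_entropy (t + i)) \<le> real i * ?c"
      using assms by (intro sum_diff_shift_le) (auto intro: avg_cond_entropy_bounds)
    also have "\<dots> \<le> real k * ?c"
      using \<open>i \<in> {..<k}\<close> assms(2) finite_alphabet
      by (intro mult_right_mono) (simp_all add: Suc_le_eq card_gt_0_iff)
    finally show "(\<Sum>t<l. avg_cond_entropy t - avg_cond_entropy (t + i)) \<le> real k * ?c" .
  qed (use assms(3) in simp)
  finally show ?thesis
    by (simp add: power2_eq_square)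
qed

end

theorem lemma5p1:
  fixes V :: "'v set" and \<Sigma> :: "'a set" and k r l :: nat and \<Delta> :: real
    and W :: "'v list \<Rightarrow> real" and P :: "'v list \<Rightarrow> 'a list \<Rightarrow> real"
    and X :: "'v set \<Rightarrow> ('v \<Rightarrow> 'a) \<Rightarrow> real"
  assumes "max_kcsp V \<Sigma> k W P"
    and "0 < \<Delta>" and "csp_dense \<Delta> V k W"
    and "sherali_adams r V \<Sigma> X"
    and "0 < l" and "l \<le> r - k"
  shows "\<exists>t\<le>l. exp_cond_corr W V \<Sigma> k X t
           \<le> real k ^ 2 * ln (real (card \<Sigma>)) / (real l * \<Delta>)"
proof -
  have V: "finite V" "V \<noteq> {}" and \<Sigma>: "finite \<Sigma>" "\<Sigma> \<noteq> {}"
    using assms(1) unfolding max_kcsp_def by auto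
  interpret sa_solution r V \<Sigma> X
    using assms(4) V \<Sigma> by unfold_locales
  have "(\<Sum>t<l. exp_cond_corr W V \<Sigma> k X t) \<le> real k ^ 2 * ln (real (card \<Sigma>)) / \<Delta>"
    using assms V \<Sigma> by (intro sum_exp_cond_corr_le) auto
  then obtain t where "t < l" "exp_cond_corr W V \<Sigma> k X t \<le> real k ^ 2 * ln (real (card \<Sigma>)) / \<Delta> / real l"
    using ex_le_average assms(5) by blast
  then show ?thesis
    by (intro exI[of _ t]) (simp add: mult.commute)
qed

end
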